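(* Let $\Phi(z)\in K(z)$ have degree $d\ge2$ and put $B_0=B_0(\Phi)$. Assume $\Phi(0)=0$ and $\Phi$ has no poles in $D(0,B_0)^-$, so that $\Phi(D(0,B_0)^-)=D(0,f_\Phi(B_0))^-$, where $f_\Phi(r)=\mathrm{diam}_\infty(\Phi(\zeta_{0,r}))$ (increasing for $0\le r\le B_0$). Suppose $\Phi$ has $n\ge1$ zeros in $D(0,B_0)^-$ and $m\ge0$ poles in $D(0,1)^-\setminus D(0,B_0)^-$, counted with multiplicity. Then $$f_\Phi(B_0)\le\frac{B_0^{\,n-m}}{\mathrm{GIR}(\Phi)}.$$
   Context: $K$ is a complete, algebraically closed field with a nontrivial nonarchimedean absolute value. $D(a,r)^-=\{z\in K:|z-a|<r\}$. Fix $q>1$. $\mathbf P^1_{\mathrm{Berk}}$ is the Berkovich projective line over $K$ (tree containing $\mathbf P^1(K)$); $\zeta_{a,r}$ is the point of $D(a,r)=\{|z-a|\le r\}$, $\zeta_{a,0}=a$, $\zeta_G=\zeta_{0,1}$; $[x,y]$ unique path, $(x,y]$ half-open. $\mathrm{diam}_\infty(\zeta_{a,r})=r$ for $a\in K$, $r\ge0$. $\rho$ is the logarithmic path metric on $\mathbf H^1=\mathbf P^1_{\mathrm{Berk}}\setminus\mathbf P^1(K)$; $\mathrm{diam}_G(x)=q^{-\rho(\zeta_G,x)}$, explicitly $\mathrm{diam}_G(\zeta_{a,r})=r/\max(1,|a|,r)^2$. $\mathrm{GIR}(\Phi)=\mathrm{diam}_G(\Phi(\zeta_G))$. For $a\in\mathbf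 P^1(K)$, $0<r<1$, $Q_{a,r}$ is the point of $[a,\zeta_G]$ with $\mathrm{diam}_G=r$, $\mathcal B(a,r)^-=\{x:Q_{a,r}\in(x,\zeta_G]\}$, $\mathcal B(a,1)^-=\bigcup_{r<1}\mathcal B(a,r)^-$; $B_0(\Phi)=\sup\{0<r\le1:\Phi(\mathcal B(a,r)^-)\ne\mathbf P^1_{\mathrm{Berk}}\ \forall a\in\mathbf P^1(K)\}$. *)

theory Defs
  imports "HOL-Computational_Algebra.Polynomial" "HOL-Computational_Algebra.Polynomial_Factorial" Complex_Main
begin

definition nonarch_abs :: "('a::field \<Rightarrow> real) \<Rightarrow> bool" where
  "nonarch_abs v \<longleftrightarrow> (\<forall>x. 0 \<le> v x) \<and> (\<forall>x. v x = 0 \<longleftrightarrow> x = 0)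
     \<and> (\<forall>x y. v (x * y) = v x * v y) \<and> (\<forall>x y. v (x + y) \<le> max (v x) (v y))"

definition nontrivial_abs :: "('a::field \<Rightarrow> real) \<Rightarrow> bool" where
  "nontrivial_abs v \<longleftrightarrow> (\<exists>x. v x \<noteq> 0 \<and> v x \<noteq> 1)"

definition complete_abs :: "('a::field \<Rightarrow> real) \<Rightarrow> bool" where
  "complete_abs v \<longleftrightarrow> (\<forall>s::nat \<Rightarrow> 'a.
      (\<forall>e>0. \<exists>N. \<forall>m\<ge>N. \<forall>n\<ge>N. v (s m - s n) < e) \<longrightarrow>
      (\<exists>L. (\<lambda>n. v (s n - L)) \<longlonglongrightarrow> 0))"

definition alg_closed :: "'a::field itself \<Rightarrow> bool" where
  "alg_closed _ \<longleftrightarrow> (\<forall>p::'a poly. 1 \<le> degree p \<longrightarrow> (\<exists>z. poly p z = 0))"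

text \<open>A point of the Berkovich affine line is a multiplicative seminorm on K[T]
  extending the absolute value; the Berkovich projective line adds the point
  at infinity, represented by None.\<close>

type_synonym 'a berk = "('a poly \<Rightarrow> real) option"

definition berk_aff :: "('a::field \<Rightarrow> real) \<Rightarrow> ('a poly \<Rightarrow> real) set" where
  "berk_aff v = {s. (\<forall>c. s [:c:] = v c) \<and> (\<forall>f. 0 \<le> s f)
      \<and> (\<forall>f g. s (f * g) = s f * s g) \<and> (\<forall>f g. s (f + g) \<le> s f + s g)}"

definition berk_line :: "('a::field \<Rightarrow> real) \<Rightarrow> 'a berk set" where
  "berk_line v = insert None (Some ` berk_aff v)"

text \<open>Classical points: P^1(K) is represented by 'a option (None = infinity).\<close>

definition cpt :: "('a::field \<Rightarrow> real) \<Rightarrow> 'a option \<Rightarrow> 'a berk" where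
  "cpt v a = (case a of None \<Rightarrow> None | Some c \<Rightarrow> Some (\<lambda>g. v (poly g c)))"

definition gauss :: "('a::field \<Rightarrow> real) \<Rightarrow> real \<Rightarrow> 'a poly \<Rightarrow> real" where
  "gauss v r g = Max ((\<lambda>i. v (coeff g i) * r ^ i) ` {..degree g})"

definition zeta :: "('a::field \<Rightarrow> real) \<Rightarrow> 'a \<Rightarrow> real \<Rightarrow> 'a berk" where
  "zeta v a r = Some (\<lambda>g. gauss v r (g \<circ>\<^sub>p [:a, 1:]))"

text \<open>A rational function Phi = P/Q is given by coprime P, Q (not both zero).\<close>

definition rat_deg :: "'a::field poly \<Rightarrow> 'a poly \<Rightarrow> nat" where
  "rat_deg P Q = max (degree P) (degree Q)"

text \<open>Homogenised substitution: Q^(deg g) * g(P/Q).\<close>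
definition hsubst :: "'a::field poly \<Rightarrow> 'a poly \<Rightarrow> 'a poly \<Rightarrow> 'a poly" where
  "hsubst g P Q = (\<Sum>i\<le>degree g. smult (coeff g i) (P ^ i * Q ^ (degree g - i)))"

definition rat_act :: "('a::field \<Rightarrow> real) \<Rightarrow> 'a poly \<Rightarrow> 'a poly \<Rightarrow> 'a berk \<Rightarrow> 'a berk" where
  "rat_act v P Q x = (case x of
      None \<Rightarrow> (if degree Q < degree P then None
               else if degree P = degree Q then cpt v (Some (lead_coeff P / lead_coeff Q))
               else cpt v (Some 0))
    | Some s \<Rightarrow> (if s Q = 0 then None
                else Some (\<lambda>g. s (hsubst g P Q) / s Q ^ degree g)))"

definition diam_inf :: "'a::field berk \<Rightarrow> real" where
  "diam_inf x = (case x of None \<Rightarrow> 0 | Some s \<Rightarrow> (INF c. s [:- c, 1:]))"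

definition diam_G :: "'a::field berk \<Rightarrow> real" where
  "diam_G x = (case x of None \<Rightarrow> 0 | Some s \<Rightarrow> diam_inf x / (max 1 (s [:0, 1:]))\<^sup>2)"

definition GIR :: "('a::field \<Rightarrow> real) \<Rightarrow> 'a poly \<Rightarrow> 'a poly \<Rightarrow> real" where
  "GIR v P Q = diam_G (rat_act v P Q (zeta v 0 1))"

definition f_Phi :: "('a::field \<Rightarrow> real) \<Rightarrow> 'a poly \<Rightarrow> 'a poly \<Rightarrow> real \<Rightarrow> real" where
  "f_Phi v P Q r = diam_inf (rat_act v P Q (zeta v 0 r))"

text \<open>Hsia kernel relative to the Gauss point, between a Berkovich point x and a
  classical point a.  The set {x. Q_{a,r} in (x, zeta_G]} is exactly
  {x. hsia_G x a < r} for 0 < r < 1.\<close>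

definition hsia_G :: "('a::field \<Rightarrow> real) \<Rightarrow> 'a berk \<Rightarrow> 'a option \<Rightarrow> real" where
  "hsia_G v x a = (case (x, a) of
      (None, None) \<Rightarrow> 0
    | (None, Some c) \<Rightarrow> 1 / max 1 (v c)
    | (Some s, None) \<Rightarrow> 1 / max 1 (s [:0, 1:])
    | (Some s, Some c) \<Rightarrow> s [:- c, 1:] / (max 1 (s [:0, 1:]) * max 1 (v c)))"

definition sph_disc :: "('a::field \<Rightarrow> real) \<Rightarrow> 'a option \<Rightarrow> real \<Rightarrow> 'a berk set" where
  "sph_disc v a r = {x \<in> berk_line v. hsia_G v x a < r}"

definition B0 :: "('a::field \<Rightarrow> real) \<Rightarrow> 'a poly \<Rightarrow> 'a poly \<Rightarrow> real" where
  "B0 v P Q = Sup {r. 0 < r \<and> r \<le> 1 \<and>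
       (\<forall>a. rat_act v P Q ` sph_disc v a r \<noteq> berk_line v)}"

end

theory Submission
  imports Defs
begin

(* Taking c = 0 in diam(Phi(zeta_{0,r})) = inf_c |P - c Q|_r / |Q|_r bounds f_Phi(B) by the quotient
   of Gauss norms |P|_B / |Q|_B.  Over an algebraically closed field a polynomial is a product of
   linear factors, and |z - a|_r = max(r, |a|).  Comparing radius B with radius 1 factor by factor,
   each zero of P in D(0,B)^- contributes B instead of max(1,|a|) and each zero of Q with
   B <= |a| < 1 contributes |a| >= B instead of 1, so |P|_B <= B^n |P|_1 and |Q|_B >= B^m |Q|_1.
   Finally GIR(Phi) = D / max(1,R)^2 with R = |P|_1 / |Q|_1 and 0 < D <= R (positivity of D is
   coprimality of P and Q), which gives R <= 1 / GIR(Phi). *)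

lemma sum_order_eq_size_proots:
  fixes p :: "'a::idom poly"
  assumes "p \<noteq> 0"
  shows "(\<Sum>z\<in>{z. poly p z = 0 \<and> C z}. order z p) = size (filter_mset C (proots p))"
  using assms by (simp add: size_multiset_overloaded_eq conj_commute)

lemma proots_linear_factor_mult:
  fixes h :: "'a::idom poly"
  assumes "h \<noteq> 0"
  shows "proots ([:-a, 1:] * h) = add_mset a (proots h)"
  using assms proots_linear_factor[of "-a"] by (simp add: proots_mult del: mult_pCons_left)

lemma alg_closed_linear_factor_induct [consumes 2, case_names const linear_factor]:
  fixes g :: "'a::field poly"
  assumes "alg_closed TYPE('a)" and "g \<noteq> 0"
    and const: "\<And>c. c \<noteq> 0 \<Longrightarrow> R [:c:]"
    and linear_factor: "\<And>a h. h \<noteq> 0 \<Longrightarrow> R h \<Longrightarrow> R ([:-a, 1:] * h)"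
  shows "R g"
  using \<open>g \<noteq> 0\<close>
proof (induction "degree g" arbitrary: g)
  case 0
  then show ?case by (metis const degree_eq_zeroE pCons_0_0)
next
  case (Suc k)
  then obtain a where "poly g a = 0"
    using assms(1) unfolding alg_closed_def by (metis le_add1 plus_1_eq_Suc)
  then obtain h where g: "g = [:-a, 1:] * h"
    by (metis dvdE poly_eq_0_iff_dvd)
  with Suc.prems have "h \<noteq> 0" by auto
  moreover have "degree h = k"
    using Suc.hyps(2) \<open>h \<noteq> 0\<close> by (simp add: g degree_mult_eq del: mult_pCons_left)
  ultimately show ?case
    using Suc.hyps(1) g linear_factor by blast
qed

lemma coeff_linear_factor_mult_0:
  fixes a :: "'a::comm_ring_1"
  shows "coeff ([:-a, 1:] * h) 0 = - a * coeff h 0"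
  by (simp add: mult_pCons_left)

lemma coeff_linear_factor_mult_Suc:
  fixes a :: "'a::comm_ring_1"
  shows "coeff ([:-a, 1:] * h) (Suc i) = coeff h i - a * coeff h (Suc i)"
  by (simp add: mult_pCons_left)

lemma coprime_not_proportional:
  fixes P Q :: "'a::field poly"
  assumes "coprime P Q" and "Q \<noteq> 0" and "0 < rat_deg P Q"
  shows "\<exists>i j. coeff P i * coeff Q j \<noteq> coeff P j * coeff Q i"
proof (rule ccontr)
  assume "\<not> ?thesis"
  then have minors: "coeff P i * lead_coeff Q = coeff P (degree Q) * coeff Q i" for i
    by blast
  define c where "c = coeff P (degree Q) / lead_coeff Q"
  have "P = smult c Q"
    using minors \<open>Q \<noteq> 0\<close> by (intro poly_eqI) (simp add: c_def field_simps)
  then have "is_unit Q"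
    using \<open>coprime P Q\<close> by (metis coprime_common_divisor dvd_refl dvd_smult)
  then have "degree Q = 0"
    using is_unit_iff_degree[OF \<open>Q \<noteq> 0\<close>] by simp
  moreover have "degree P \<le> degree Q"
    using \<open>P = smult c Q\<close> degree_smult_le by simp
  ultimately show False
    using \<open>0 < rat_deg P Q\<close> by (simp add: rat_deg_def)
qed

lemma hsubst_linear:
  fixes P Q :: "'a::field poly"
  shows "hsubst [:-c, 1:] P Q = P - smult c Q"
  unfolding hsubst_def by (simp add: atMost_Suc smult_minus_left)

lemma rat_act_zeta_0:
  assumes "gauss v r Q \<noteq> 0"
  shows "rat_act v P Q (zeta v 0 r) = Some (\<lambda>g. gauss v r (hsubst g P Q) / gauss v r Q ^ degree g)"
  using assms unfolding zeta_def rat_act_def by simp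

lemma diam_inf_rat_act_zeta_0:
  assumes "gauss v r Q \<noteq> 0"
  shows "diam_inf (rat_act v P Q (zeta v 0 r)) = (INF c. gauss v r (P - smult c Q) / gauss v r Q)"
  unfolding rat_act_zeta_0[OF assms] diam_inf_def by (simp add: hsubst_linear)

lemma gauss_const [simp]: "gauss v r [:c:] = v c"
  by (simp add: gauss_def)

locale nonarch_abs_field =
  fixes v :: "'a::field \<Rightarrow> real"
  assumes nonarch: "nonarch_abs v"
begin

lemma v_nonneg: "0 \<le> v x"
  using nonarch by (simp add: nonarch_abs_def)

lemma v_eq_0_iff [simp]: "v x = 0 \<longleftrightarrow> x = 0"
  using nonarch by (simp add: nonarch_abs_def)

lemma v_mult: "v (x * y) = v x * v y"
  using nonarch by (simp add: nonarch_abs_def)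

lemma v_add_le: "v (x + y) \<le> max (v x) (v y)"
  using nonarch by (simp add: nonarch_abs_def)

lemma v_zero [simp]: "v 0 = 0"
  by simp

lemma v_pos: "x \<noteq> 0 \<Longrightarrow> 0 < v x"
  using v_nonneg[of x] by (simp add: order_less_le)

lemma v_uminus [simp]: "v (- x) = v x"
proof -
  have "v 1 = 1"
    using v_mult[of 1 1] by simp
  then have "v (-1) * v (-1) = 1"
    using v_mult[of "-1" "-1"] by simp
  then have "v (-1) = 1"
    using v_nonneg[of "-1"] by (metis abs_of_nonneg abs_square_eq_1 power2_eq_square)
  then show ?thesis
    using v_mult[of "-1" x] by simp
qed

lemma v_diff_le: "v (x - y) \<le> max (v x) (v y)"
  using v_add_le[of x "- y"] by simp

lemma v_add_eq_left: assumes "v y < v x" shows "v (x + y) = v x"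
proof -
  have "v x \<le> max (v (x + y)) (v y)"
    using v_diff_le[of "x + y" y] by simp
  then show ?thesis
    using v_add_le[of x y] assms by linarith
qed

lemma v_diff_eq_left: "v y < v x \<Longrightarrow> v (x - y) = v x"
  using v_add_eq_left[of "- y" x] by simp

lemma v_diff_eq_right: "v x < v y \<Longrightarrow> v (x - y) = v y"
  using v_add_eq_left[of x "- y"] by (simp add: add.commute)

lemma gauss_coeff_le: assumes "0 \<le> r" shows "v (coeff g i) * r ^ i \<le> gauss v r g"
proof (cases "i \<le> degree g")
  case True
  then show ?thesis unfolding gauss_def by (intro Max_ge) auto
next
  case False
  have "v (coeff g 0) * r ^ 0 \<le> gauss v r g"
    unfolding gauss_def by (intro Max_ge) (auto intro!: image_eqI[where x = 0])
  then show ?thesis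
    using False v_nonneg[of "coeff g 0"] by (simp add: coeff_eq_0)
qed

lemma gauss_nonneg: "0 \<le> r \<Longrightarrow> 0 \<le> gauss v r g"
  using gauss_coeff_le[of r g 0] v_nonneg[of "coeff g 0"] by simp

lemma gauss_attained: "\<exists>i. gauss v r g = v (coeff g i) * r ^ i"
proof -
  have "gauss v r g \<in> (\<lambda>i. v (coeff g i) * r ^ i) ` {..degree g}"
    unfolding gauss_def by (intro Max_in) auto
  then show ?thesis by auto
qed

lemma gauss_eqI:
  assumes "0 \<le> r" and "\<And>i. v (coeff g i) * r ^ i \<le> M" and "v (coeff g j) * r ^ j = M"
  shows "gauss v r g = M"
  using gauss_attained[of r g] gauss_coeff_le[OF assms(1), of g j] assms(2,3)
  by (metis order_antisym)

lemma gauss_pos: assumes "0 < r" and "g \<noteq> 0" shows "0 < gauss v r g"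
proof -
  have "0 < v (lead_coeff g) * r ^ degree g"
    using v_pos[of "lead_coeff g"] assms by simp
  then show ?thesis
    using gauss_coeff_le[of r g "degree g"] assms(1) by linarith
qed

lemma gauss_dominant_indices:
  assumes "0 < r" and "h \<noteq> 0"
  shows "finite {i. v (coeff h i) * r ^ i = gauss v r h}"
    and "{i. v (coeff h i) * r ^ i = gauss v r h} \<noteq> {}"
proof -
  have "{i. v (coeff h i) * r ^ i = gauss v r h} \<subseteq> {..degree h}"
  proof
    fix i
    assume "i \<in> {i. v (coeff h i) * r ^ i = gauss v r h}"
    then have "coeff h i \<noteq> 0"
      using gauss_pos[OF assms] by auto
    then show "i \<in> {..degree h}"
      by (simp add: le_degree)
  qed
  then show "finite {i. v (coeff h i) * r ^ i = gauss v r h}"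
    by (rule finite_subset) simp
  obtain i where "gauss v r h = v (coeff h i) * r ^ i"
    using gauss_attained by blast
  then show "{i. v (coeff h i) * r ^ i = gauss v r h} \<noteq> {}"
    by auto
qed

lemma gauss_linear_factor_coeff_le:
  assumes r: "0 < r"
  shows "v (coeff ([:-a, 1:] * h) i) * r ^ i \<le> max r (v a) * gauss v r h"
proof (cases i)
  case 0
  have "v a * v (coeff h 0) \<le> max r (v a) * gauss v r h"
    using gauss_coeff_le[of r h 0] r v_nonneg by (intro mult_mono) auto
  then show ?thesis
    using 0 by (simp add: coeff_linear_factor_mult_0 v_mult)
next
  case (Suc j)
  have "v (coeff h j - a * coeff h (Suc j)) * r ^ Suc j
      \<le> max (v (coeff h j)) (v (a * coeff h (Suc j))) * r ^ Suc j"
    using r by (intro mult_right_mono v_diff_le) auto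
  also have "\<dots> = max (v (coeff h j) * r ^ Suc j) (v (a * coeff h (Suc j)) * r ^ Suc j)"
    using r by (simp add: max_mult_distrib_right)
  also have "\<dots> = max (r * (v (coeff h j) * r ^ j)) (v a * (v (coeff h (Suc j)) * r ^ Suc j))"
    by (simp add: v_mult mult_ac)
  also have "\<dots> \<le> max (r * gauss v r h) (v a * gauss v r h)"
    using gauss_coeff_le[of r h j] gauss_coeff_le[of r h "Suc j"] r v_nonneg[of a]
    by (intro max.mono mult_left_mono) (simp_all del: power_Suc)
  also have "\<dots> = max r (v a) * gauss v r h"
    using gauss_nonneg[of r h] r by (simp add: max_mult_distrib_right)
  finally show ?thesis
    using Suc by (simp add: coeff_linear_factor_mult_Suc)
qed

text \<open>In \<open>(z - a) h = z h - a h\<close>: if \<open>v a \<le> r\<close>, the part \<open>z h\<close> dominates one index above the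
  last index where \<open>h\<close> attains its Gauss norm; otherwise \<open>a h\<close> dominates at the first such index.\<close>

lemma gauss_linear_factor_attained_small:
  assumes r: "0 < r" and h: "h \<noteq> 0" and "v a \<le> r"
  shows "\<exists>j. v (coeff ([:-a, 1:] * h) j) * r ^ j = r * gauss v r h"
proof -
  define S where "S = {i. v (coeff h i) * r ^ i = gauss v r h}"
  define i where "i = Max S"
  have S: "finite S" "S \<noteq> {}"
    using gauss_dominant_indices[OF r h] by (simp_all add: S_def)
  then have "i \<in> S"
    by (simp add: i_def)
  have "Suc i \<notin> S"
    using Max_ge[OF S(1), of "Suc i"] by (auto simp: i_def)
  then have "v (coeff h (Suc i)) * r ^ Suc i < gauss v r h"
    using gauss_coeff_le[of r h "Suc i"] r by (auto simp: S_def simp del: power_Suc)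
  then have "r * (v (coeff h (Suc i)) * r ^ Suc i) < r * gauss v r h"
    using r by simp
  moreover have "v (a * coeff h (Suc i)) * r ^ Suc i \<le> r * (v (coeff h (Suc i)) * r ^ Suc i)"
    using \<open>v a \<le> r\<close> r v_nonneg[of "coeff h (Suc i)"] by (simp add: v_mult mult.assoc mult_right_mono)
  ultimately have "v (a * coeff h (Suc i)) * r ^ Suc i < r * gauss v r h"
    by linarith
  also have "\<dots> = v (coeff h i) * r ^ Suc i"
    using \<open>i \<in> S\<close> by (simp add: S_def)
  finally have "v (a * coeff h (Suc i)) < v (coeff h i)"
    using r by (simp del: power_Suc)
  then have "v (coeff ([:-a, 1:] * h) (Suc i)) * r ^ Suc i = r * gauss v r h"
    using \<open>i \<in> S\<close> by (simp add: coeff_linear_factor_mult_Suc v_diff_eq_left S_def)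
  then show ?thesis ..
qed

lemma gauss_linear_factor_attained_large:
  assumes r: "0 < r" and h: "h \<noteq> 0" and "r < v a"
  shows "\<exists>j. v (coeff ([:-a, 1:] * h) j) * r ^ j = v a * gauss v r h"
proof -
  define S where "S = {i. v (coeff h i) * r ^ i = gauss v r h}"
  define i where "i = Min S"
  have S: "finite S" "S \<noteq> {}"
    using gauss_dominant_indices[OF r h] by (simp_all add: S_def)
  then have "i \<in> S"
    by (simp add: i_def)
  then have ai: "v (a * coeff h i) * r ^ i = v a * gauss v r h"
    by (simp add: S_def v_mult)
  have "v (coeff ([:-a, 1:] * h) i) = v (a * coeff h i)"
  proof (cases i)
    case 0
    then show ?thesis by (simp add: coeff_linear_factor_mult_0)
  next
    case (Suc j)
    have "j \<notin> S"
      using Min_le[OF S(1), of j] Suc by (auto simp: i_def)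
    then have "v (coeff h j) * r ^ j < gauss v r h"
      using gauss_coeff_le[of r h j] r by (auto simp: S_def)
    then have "v (coeff h j) * r ^ Suc j < r * gauss v r h"
      using r by simp
    also have "\<dots> < v a * gauss v r h"
      using \<open>r < v a\<close> gauss_pos[OF r h] by simp
    finally have "v (coeff h j) * r ^ Suc j < v (a * coeff h (Suc j)) * r ^ Suc j"
      using ai Suc by simp
    then show ?thesis
      using Suc r by (simp add: coeff_linear_factor_mult_Suc v_diff_eq_right)
  qed
  then show ?thesis
    using ai by metis
qed

lemma gauss_linear_factor:
  assumes r: "0 < r" and h: "h \<noteq> 0"
  shows "gauss v r ([:-a, 1:] * h) = max r (v a) * gauss v r h"
proof -
  have "\<exists>j. v (coeff ([:-a, 1:] * h) j) * r ^ j = max r (v a) * gauss v r h"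
  proof (cases "v a \<le> r")
    case True
    then show ?thesis
      using gauss_linear_factor_attained_small[OF r h] by (simp add: max_absorb1)
  next
    case False
    then show ?thesis
      using gauss_linear_factor_attained_large[OF r h] by (simp add: max_absorb2)
  qed
  then show ?thesis
    using gauss_linear_factor_coeff_le[OF r] r by (metis gauss_eqI less_imp_le)
qed

lemma gauss_le_radius_pow_zeros:
  assumes "alg_closed TYPE('a)" and B: "0 < B" and "g \<noteq> 0"
  shows "gauss v B g \<le> B ^ size {#z \<in># proots g. v z < B#} * gauss v 1 g"
  using assms(1,3)
proof (induction g rule: alg_closed_linear_factor_induct)
  case (const c)
  then show ?case by simp
next
  case (linear_factor a h)
  define e :: nat where "e = (if v a < B then 1 else 0)"
  define N where "N = size {#z \<in># proots h. v z < B#}"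
  have factor: "max B (v a) \<le> B ^ e * max 1 (v a)"
  proof (cases "v a < B")
    case True
    have "B * 1 \<le> B * max 1 (v a)"
      using B by (intro mult_left_mono) auto
    then show ?thesis
      using True by (simp add: e_def)
  qed (simp add: e_def)
  have "gauss v B ([:-a, 1:] * h) = max B (v a) * gauss v B h"
    using gauss_linear_factor[OF B \<open>h \<noteq> 0\<close>] .
  also have "\<dots> \<le> (B ^ e * max 1 (v a)) * (B ^ N * gauss v 1 h)"
    using factor linear_factor.IH B gauss_nonneg by (intro mult_mono) (auto simp: N_def)
  also have "\<dots> = B ^ (e + N) * gauss v 1 ([:-a, 1:] * h)"
    using gauss_linear_factor[OF zero_less_one \<open>h \<noteq> 0\<close>] by (simp add: power_add mult_ac)
  also have "e + N = size {#z \<in># proots ([:-a, 1:] * h). v z < B#}"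
    unfolding proots_linear_factor_mult[OF \<open>h \<noteq> 0\<close>] by (simp add: e_def N_def)
  finally show ?case .
qed

lemma radius_pow_poles_le_gauss:
  assumes "alg_closed TYPE('a)" and B: "0 < B" and "g \<noteq> 0"
    and "\<forall>z. v z < B \<longrightarrow> poly g z \<noteq> 0"
  shows "B ^ size {#z \<in># proots g. B \<le> v z \<and> v z < 1#} * gauss v 1 g \<le> gauss v B g"
  using assms(1,3,4)
proof (induction g rule: alg_closed_linear_factor_induct)
  case (const c)
  then show ?case by simp
next
  case (linear_factor a h)
  define e :: nat where "e = (if v a < 1 then 1 else 0)"
  define N where "N = size {#z \<in># proots h. B \<le> v z \<and> v z < 1#}"
  have "B \<le> v a"
    using linear_factor.prems by (metis not_le poly_eq_0_iff_dvd dvd_triv_left)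
  then have factor: "B ^ e * max 1 (v a) \<le> max B (v a)"
    by (auto simp: e_def)
  have "size {#z \<in># proots ([:-a, 1:] * h). B \<le> v z \<and> v z < 1#} = e + N"
    unfolding proots_linear_factor_mult[OF \<open>h \<noteq> 0\<close>] using \<open>B \<le> v a\<close> by (simp add: e_def N_def)
  then have "B ^ size {#z \<in># proots ([:-a, 1:] * h). B \<le> v z \<and> v z < 1#} * gauss v 1 ([:-a, 1:] * h)
      = (B ^ e * max 1 (v a)) * (B ^ N * gauss v 1 h)"
    using gauss_linear_factor[OF zero_less_one \<open>h \<noteq> 0\<close>] by (simp add: power_add mult_ac)
  also have "\<dots> \<le> max B (v a) * gauss v B h"
    using factor linear_factor.IH linear_factor.prems B gauss_nonneg
    by (intro mult_mono) (auto simp: N_def)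
  also have "\<dots> = gauss v B ([:-a, 1:] * h)"
    using gauss_linear_factor[OF B \<open>h \<noteq> 0\<close>] by simp
  finally show ?case .
qed

lemma gauss_quotient_le_radius_powr:
  assumes "alg_closed TYPE('a)" and B: "0 < B" and "P \<noteq> 0" and "Q \<noteq> 0"
    and "\<forall>z. v z < B \<longrightarrow> poly Q z \<noteq> 0"
  shows "gauss v B P / gauss v B Q
    \<le> B powr (real (size {#z \<in># proots P. v z < B#}) - real (size {#z \<in># proots Q. B \<le> v z \<and> v z < 1#}))
       * (gauss v 1 P / gauss v 1 Q)"
proof -
  have "gauss v B P / gauss v B Q
      \<le> (B ^ size {#z \<in># proots P. v z < B#} * gauss v 1 P)
         / (B ^ size {#z \<in># proots Q. B \<le> v z \<and> v z < 1#} * gauss v 1 Q)"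
    using gauss_le_radius_pow_zeros[OF assms(1-3)] radius_pow_poles_le_gauss[OF assms(1,2,4,5)] B
      gauss_pos[OF zero_less_one \<open>P \<noteq> 0\<close>] gauss_pos[OF zero_less_one \<open>Q \<noteq> 0\<close>]
    by (intro frac_le) auto
  then show ?thesis
    using B by (simp add: powr_diff powr_realpow)
qed

lemma f_Phi_le_gauss_quotient:
  assumes "0 < r" and "Q \<noteq> 0"
  shows "f_Phi v P Q r \<le> gauss v r P / gauss v r Q"
proof -
  have "gauss v r Q \<noteq> 0"
    using gauss_pos[OF assms] by simp
  then have "f_Phi v P Q r = (INF c. gauss v r (P - smult c Q) / gauss v r Q)"
    unfolding f_Phi_def by (rule diam_inf_rat_act_zeta_0)
  also have "\<dots> \<le> gauss v r (P - smult 0 Q) / gauss v r Q"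
    using assms(1) gauss_nonneg
    by (intro cINF_lower bdd_belowI[where m = 0]) (auto intro: divide_nonneg_nonneg)
  finally show ?thesis by simp
qed

lemma GIR_eq_gauss:
  assumes "Q \<noteq> 0"
  shows "GIR v P Q = (INF c. gauss v 1 (P - smult c Q) / gauss v 1 Q)
                       / (max 1 (gauss v 1 P / gauss v 1 Q))\<^sup>2"
proof -
  have Q1: "gauss v 1 Q \<noteq> 0"
    using gauss_pos[of 1 Q] assms by simp
  have "hsubst [:0, 1:] P Q = P"
    using hsubst_linear[of 0 P Q] by simp
  then have "GIR v P Q = diam_inf (rat_act v P Q (zeta v 0 1)) / (max 1 (gauss v 1 P / gauss v 1 Q))\<^sup>2"
    unfolding GIR_def using rat_act_zeta_0[OF Q1] by (simp add: diam_G_def)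
  then show ?thesis
    using diam_inf_rat_act_zeta_0[OF Q1] by simp
qed

text \<open>A nonvanishing \<open>2 \<times> 2\<close> minor \<open>\<Delta>\<close> of the coefficients of \<open>P\<close> and \<open>Q\<close> is a
  combination, with coefficients of \<open>Q\<close>, of two coefficients of \<open>P - c Q\<close>; this bounds
  the Gauss norm of \<open>P - c Q\<close> from below uniformly in \<open>c\<close>.\<close>

lemma gauss_pencil_lower_bound:
  assumes "coeff P i * coeff Q j \<noteq> coeff P j * coeff Q i"
  shows "\<exists>\<delta>>0. \<forall>c. \<delta> \<le> gauss v 1 (P - smult c Q)"
proof -
  define \<Delta> where "\<Delta> = coeff P i * coeff Q j - coeff P j * coeff Q i"
  define M where "M = max (v (coeff Q i)) (v (coeff Q j))"
  have "\<Delta> \<noteq> 0"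
    using assms by (simp add: \<Delta>_def)
  then have "coeff Q i \<noteq> 0 \<or> coeff Q j \<noteq> 0"
    by (auto simp: \<Delta>_def)
  then have "0 < M"
    using v_pos by (auto simp: M_def less_max_iff_disj)
  have "v \<Delta> \<le> M * gauss v 1 (P - smult c Q)" for c
  proof -
    have "\<Delta> = coeff Q j * (coeff P i - c * coeff Q i) - coeff Q i * (coeff P j - c * coeff Q j)"
      by (simp add: \<Delta>_def algebra_simps)
    then have "v \<Delta> \<le> max (v (coeff Q j) * v (coeff P i - c * coeff Q i))
                           (v (coeff Q i) * v (coeff P j - c * coeff Q j))"
      using v_diff_le[of "coeff Q j * (coeff P i - c * coeff Q i)" "coeff Q i * (coeff P j - c * coeff Q j)"]
      by (simp add: v_mult)
    also have "\<dots> \<le> M * gauss v 1 (P - smult c Q)"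
      using gauss_coeff_le[of 1 "P - smult c Q" i] gauss_coeff_le[of 1 "P - smult c Q" j] v_nonneg
      unfolding M_def by (intro max.boundedI mult_mono) (auto simp: le_max_iff_disj)
    finally show ?thesis .
  qed
  then show ?thesis
    using \<open>0 < M\<close> \<open>\<Delta> \<noteq> 0\<close> v_pos
    by (intro exI[of _ "v \<Delta> / M"]) (simp add: divide_le_eq mult.commute)
qed

lemma gauss_quotient_le_inverse_GIR:
  assumes "coprime P Q" and "Q \<noteq> 0" and "0 < rat_deg P Q"
  shows "gauss v 1 P / gauss v 1 Q \<le> 1 / GIR v P Q"
proof -
  define D where "D = (INF c. gauss v 1 (P - smult c Q) / gauss v 1 Q)"
  define R where "R = gauss v 1 P / gauss v 1 Q"
  have Q1: "0 < gauss v 1 Q"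
    using gauss_pos assms(2) by simp
  obtain \<delta> where "0 < \<delta>" and \<delta>: "\<And>c. \<delta> \<le> gauss v 1 (P - smult c Q)"
    using coprime_not_proportional[OF assms] gauss_pencil_lower_bound by blast
  have "\<delta> / gauss v 1 Q \<le> D"
    unfolding D_def using \<delta> Q1 by (intro cINF_greatest) (auto intro: divide_right_mono)
  then have "0 < D"
    using divide_pos_pos[OF \<open>0 < \<delta>\<close> Q1] by linarith
  have "D \<le> gauss v 1 (P - smult 0 Q) / gauss v 1 Q"
    unfolding D_def using gauss_nonneg Q1
    by (intro cINF_lower bdd_belowI[where m = 0]) auto
  then have "D \<le> R"
    by (simp add: R_def)
  have "R * D \<le> (max 1 R)\<^sup>2"
    using \<open>0 < D\<close> \<open>D \<le> R\<close> mult_mono[of R "max 1 R" D "max 1 R"]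
    by (simp add: power2_eq_square)
  then have "R \<le> (max 1 R)\<^sup>2 / D"
    using \<open>0 < D\<close> by (simp add: pos_le_divide_eq)
  also have "\<dots> = 1 / GIR v P Q"
    using GIR_eq_gauss[OF assms(2), of P] by (simp add: D_def R_def)
  finally show ?thesis
    unfolding R_def .
qed

end

theorem lemma5p5:
  fixes v :: "'a::field \<Rightarrow> real" and P Q :: "'a poly" and n m :: nat
  assumes "nonarch_abs v" and "nontrivial_abs v" and "complete_abs v"
    and "alg_closed TYPE('a)"
    and "coprime P Q" and "Q \<noteq> 0"
    and "rat_deg P Q \<ge> 2"
    and "poly P 0 = 0" and "poly Q 0 \<noteq> 0"
    and "\<forall>z. v z < B0 v P Q \<longrightarrow> poly Q z \<noteq> 0"
    and "n = (\<Sum>z\<in>{z. poly P z = 0 \<and> v z < B0 v P Q}. order z P)"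
    and "m = (\<Sum>z\<in>{z. poly Q z = 0 \<and> B0 v P Q \<le> v z \<and> v z < 1}. order z Q)"
    and "n \<ge> 1"
  shows "f_Phi v P Q (B0 v P Q) \<le> B0 v P Q powr (real n - real m) / GIR v P Q"
proof -
  interpret nonarch_abs_field v
    by (rule nonarch_abs_field.intro) (fact assms(1))
  define B where "B = B0 v P Q"
  have nonconst: "0 < rat_deg P Q"
    using assms(7) by simp
  have "P \<noteq> 0"
    using coprime_not_proportional[OF assms(5,6) nonconst] by auto
  have n: "n = size {#z \<in># proots P. v z < B#}"
    using assms(11) sum_order_eq_size_proots[OF \<open>P \<noteq> 0\<close>] by (simp add: B_def)
  have m: "m = size {#z \<in># proots Q. B \<le> v z \<and> v z < 1#}"
    using assms(12) sum_order_eq_size_proots[OF assms(6)] by (simp add: B_def)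
  obtain z where "z \<in># {#z \<in># proots P. v z < B#}"
    using \<open>n \<ge> 1\<close> n by (metis multiset_nonemptyE not_one_le_zero size_empty)
  then have "0 < B"
    using v_nonneg[of z] by simp
  have "f_Phi v P Q B \<le> gauss v B P / gauss v B Q"
    by (rule f_Phi_le_gauss_quotient[OF \<open>0 < B\<close> assms(6)])
  also have "\<dots> \<le> B powr (real n - real m) * (gauss v 1 P / gauss v 1 Q)"
    using gauss_quotient_le_radius_powr[OF assms(4) \<open>0 < B\<close> \<open>P \<noteq> 0\<close> assms(6)] assms(10)
    by (simp add: n m B_def)
  also have "\<dots> \<le> B powr (real n - real m) * (1 / GIR v P Q)"
    using gauss_quotient_le_inverse_GIR[OF assms(5,6) nonconst] by (intro mult_left_mono) auto
  finally show ?thesis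
    by (simp add: B_def)
qed

end
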